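(* Let $n\ge 1$ be an integer and $p\ge 3$ a prime. Let $S\subset(\mathbb{Z}_{\ge 0})^n\setminus\{0\}$ be a finite set with $|S|\le \frac12 p^n-1$ such that for every $\alpha=(\alpha_1,\dots,\alpha_n)\in S$ some coordinate $\alpha_i$ is not divisible by $p$. Let $r=\sqrt{\frac14(n-1)+\left(\frac{p-2}{2p}\right)^2}$. Then every multivariate trigonometric polynomial with spectrum $S$, i.e. every function $f\colon (S^1)^n\to\mathbb{R}$ of the form $$f(t_1,\dots,t_n)=\sum_{\alpha\in S}\Big(a_\alpha\cos\big(2\pi\textstyle\sum_i\alpha_it_i\big)+b_\alpha\sin\big(2\pi\textstyle\sum_i\alpha_it_i\big)\Big),\qquad a_\alpha,b_\alpha\in\mathbb{R},$$ has a zero on every closed geodesic ball of radius $r$ in $(S^1)^n$.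
   Context: $S^1=[0,1]/(0\sim1)$, and the torus $(S^1)^n$ is obtained from the cube $[0,1]^n$ by gluing opposite facets without a twist; it carries the quotient ($\ell_2$) metric inherited from the Euclidean metric on $[0,1]^n$, i.e. $\mathrm{dist}(s,t)=\big(\sum_i \min(|s_i-t_i|,1-|s_i-t_i|)^2\big)^{1/2}$ for representatives in $[0,1)$. A closed geodesic ball of radius $r$ is a set $\{y:\mathrm{dist}(x,y)\le r\}$. *)

theory Defs
  imports "HOL-Analysis.Analysis"
begin

text \<open>Points of the torus (S^1)^n are represented by functions t :: nat => real whose
  first n coordinates lie in [0,1) (coordinates >= n are ignored).  The quotient l2 metric:\<close>
definition torus_dist :: "nat \<Rightarrow> (nat \<Rightarrow> real) \<Rightarrow> (nat \<Rightarrow> real) \<Rightarrow> real" where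
  "torus_dist n s t = sqrt (\<Sum>i<n. (min \<bar>s i - t i\<bar> (1 - \<bar>s i - t i\<bar>))^2)"

definition torus_pt :: "nat \<Rightarrow> (nat \<Rightarrow> real) \<Rightarrow> bool" where
  "torus_pt n t \<longleftrightarrow> (\<forall>i<n. 0 \<le> t i \<and> t i < 1)"

text \<open>Trigonometric polynomial with spectrum S; multi-indices are nat lists of length n.\<close>
definition trig_poly :: "nat \<Rightarrow> nat list set \<Rightarrow> (nat list \<Rightarrow> real) \<Rightarrow> (nat list \<Rightarrow> real)
    \<Rightarrow> (nat \<Rightarrow> real) \<Rightarrow> real" where
  "trig_poly n S a b t = (\<Sum>\<alpha>\<in>S. a \<alpha> * cos (2 * pi * (\<Sum>i<n. real (\<alpha> ! i) * t i))
                               + b \<alpha> * sin (2 * pi * (\<Sum>i<n. real (\<alpha> ! i) * t i)))"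

end

theory Submission
  imports Defs
begin

text \<open>For an odd modulus p, every character \<open>t \<mapsto> e(\<alpha>\<cdot>t)\<close> with some \<open>\<alpha>\<^sub>i\<close> prime to p sums
  to zero over the grid \<open>x + k/p\<close>, \<open>k \<in> {0..p-1}\<^sup>n\<close>, so f averages to zero there. Each grid point
  has a lift \<open>x + v\<close> with \<open>|v\<^sub>i| \<le> (p-1)/(2p)\<close>, so either f(x) = 0 or f changes sign along
  a segment from x to one of these lifts; the intermediate value theorem gives a zero within
  distance \<open>\<surd>n (p-1)/(2p)\<close>, which is at most r once n \<ge> 2. For n = 1 this is too weak, and one averages over \<open>x - 1/2 + k/p\<close> with the
  weights \<open>1 - cos(2\<pi>\<beta>k/p)\<close> instead: they vanish at k = 0, are positive for 0 < k < p, and kill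
  every frequency \<open>\<alpha>\<close> with \<open>\<alpha>, \<alpha> \<pm> \<beta> \<noteq> 0 mod p\<close>; such a \<open>\<beta>\<close> exists because \<open>|S| \<le> p/2 - 1\<close>.
  The remaining points lie within \<open>(p-2)/(2p)\<close> of x.\<close>

lemma cis_sum: "cis (sum f A) = (\<Prod>x\<in>A. cis (f x))"
  by (induction A rule: infinite_finite_induct) (auto simp: cis_mult[symmetric])

lemma cos_2pi_div_eq_1_iff:
  fixes p :: nat and g :: int
  assumes "p > 0"
  shows "cos (2 * pi * g / p) = 1 \<longleftrightarrow> int p dvd g"
proof
  assume "cos (2 * pi * g / p) = 1"
  then obtain m :: int where "2 * pi * g / p = real_of_int m * 2 * pi"
    using cos_one_2pi_int by blast
  then have "real_of_int g = real_of_int (m * int p)"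
    using assms by (simp add: field_simps)
  then show "int p dvd g"
    by (metis dvd_triv_right of_int_eq_iff)
next
  assume "int p dvd g"
  then obtain m where "g = int p * m" by blast
  then have "2 * pi * g / p = real_of_int m * 2 * pi"
    using assms by simp
  then show "cos (2 * pi * g / p) = 1"
    using cos_one_2pi_int by blast
qed

lemma sum_roots_of_unity_eq_0:
  fixes p :: nat and g :: int
  assumes "p > 0" "\<not> int p dvd g"
  shows "(\<Sum>k<p. cis (2 * pi * g * k / p)) = 0"
proof -
  define w where "w = cis (2 * pi * g / p)"
  have w_power: "w ^ k = cis (2 * pi * g * k / p)" for k
    using Complex.DeMoivre[of "2 * pi * g / p" k] unfolding w_def by (simp add: field_simps)
  have "w ^ p = 1"
    unfolding w_power using assms(1) cis_multiple_2pi[of "real_of_int g"] by simp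
  moreover have "w \<noteq> 1"
    using cos_2pi_div_eq_1_iff[OF assms(1)] assms(2) unfolding w_def
    by (metis cis.sel(1) one_complex.sel(1))
  ultimately have "(\<Sum>k<p. w ^ k) = 0"
    by (simp add: sum_gp_strict)
  then show ?thesis
    by (simp add: w_power)
qed

lemma sum_cis_grid_eq_0:
  fixes p n :: nat and \<alpha> :: "nat list" and x :: "nat \<Rightarrow> real"
  assumes "p > 0" "j < n" "\<not> p dvd \<alpha> ! j"
  shows "(\<Sum>k\<in>PiE {..<n} (\<lambda>_. {..<p}). cis (2 * pi * (\<Sum>i<n. \<alpha> ! i * (x i + k i / p)))) = 0"
proof -
  define c where "c = (\<Prod>i<n. cis (2 * pi * \<alpha> ! i * x i))"
  define g where "g i \<kappa> = cis (2 * pi * \<alpha> ! i * \<kappa> / p)" for i \<kappa> :: nat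
  have factor: "cis (2 * pi * (\<Sum>i<n. \<alpha> ! i * (x i + k i / p))) = c * (\<Prod>i<n. g i (k i))"
    for k :: "nat \<Rightarrow> nat"
  proof -
    have "2 * pi * (\<Sum>i<n. \<alpha> ! i * (x i + k i / p))
        = (\<Sum>i<n. 2 * pi * \<alpha> ! i * x i + 2 * pi * \<alpha> ! i * k i / p)"
      by (simp add: sum_distrib_left algebra_simps)
    then show ?thesis
      unfolding c_def g_def by (simp add: cis_sum cis_mult[symmetric] prod.distrib)
  qed
  have "(\<Sum>\<kappa><p. g j \<kappa>) = 0"
    unfolding g_def using sum_roots_of_unity_eq_0[of p "int (\<alpha> ! j)"] assms by simp
  then have "(\<Prod>i<n. \<Sum>\<kappa><p. g i \<kappa>) = 0"
    using assms(2) by (intro prod_zero) auto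
  then have "(\<Sum>k\<in>PiE {..<n} (\<lambda>_. {..<p}). \<Prod>i<n. g i (k i)) = 0"
    by (subst prod_sum_PiE[symmetric]) auto
  then show ?thesis
    by (simp add: factor sum_distrib_left[symmetric])
qed

text \<open>Writing \<open>cos u = (cis u + cis (-u)) / 2\<close> splits the sum into three sums of p-th roots of
  unity, with frequencies A, A + B and A - B.\<close>
lemma sum_one_minus_cos_cis_eq_0:
  fixes p :: nat and A B :: int and \<theta> :: real
  assumes "p > 0" "\<not> int p dvd A" "\<not> int p dvd (A + B)" "\<not> int p dvd (A - B)"
  shows "(\<Sum>k<p. (1 - cos (2 * pi * B * k / p)) * cis (\<theta> + 2 * pi * A * k / p)) = 0"
proof -
  have "complex_of_real (1 - cos u) * cis (\<theta> + t) = cis \<theta> * (cis t - cis (t + u) / 2 - cis (t - u) / 2)"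
    for t u
    by (simp add: complex_eq_iff cos_add sin_add cos_diff sin_diff field_simps)
  moreover have "2 * pi * (A + B) * k / p = 2 * pi * A * k / p + 2 * pi * B * k / p"
    "2 * pi * (A - B) * k / p = 2 * pi * A * k / p - 2 * pi * B * k / p" for k :: nat
    by (simp_all add: algebra_simps add_divide_distrib diff_divide_distrib)
  ultimately have expand: "(1 - cos (2 * pi * B * k / p)) * cis (\<theta> + 2 * pi * A * k / p)
     = cis \<theta> * (cis (2 * pi * A * k / p) - cis (2 * pi * of_int (A + B) * k / p) / 2
                    - cis (2 * pi * of_int (A - B) * k / p) / 2)" for k :: nat
    by (metis of_int_add of_int_diff)
  show ?thesis
    unfolding expand sum_distrib_left[symmetric] sum_subtractf sum_divide_distrib[symmetric]
      sum_roots_of_unity_eq_0[OF assms(1,2)] sum_roots_of_unity_eq_0[OF assms(1,3)]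
      sum_roots_of_unity_eq_0[OF assms(1,4)]
    by simp
qed

lemma trig_poly_eq_Re_sum_cis:
  fixes z :: "nat \<Rightarrow> real"
  shows "trig_poly n S a b z
     = Re (\<Sum>\<alpha>\<in>S. (a \<alpha> - \<i> * b \<alpha>) * cis (2 * pi * (\<Sum>i<n. \<alpha> ! i * z i)))"
  unfolding trig_poly_def by simp

lemma weighted_sum_trig_poly_eq_0:
  fixes S :: "nat list set" and w :: "'k \<Rightarrow> real" and z :: "'k \<Rightarrow> nat \<Rightarrow> real"
  assumes "\<And>\<alpha>. \<alpha> \<in> S \<Longrightarrow> (\<Sum>k\<in>K. of_real (w k) * cis (2 * pi * (\<Sum>i<n. real (\<alpha> ! i) * z k i))) = 0"
  shows "(\<Sum>k\<in>K. w k * trig_poly n S a b (z k)) = 0"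
proof -
  have "(\<Sum>k\<in>K. w k * trig_poly n S a b (z k))
      = Re (\<Sum>\<alpha>\<in>S. (a \<alpha> - \<i> * b \<alpha>)
               * (\<Sum>k\<in>K. of_real (w k) * cis (2 * pi * (\<Sum>i<n. real (\<alpha> ! i) * z k i))))"
    unfolding trig_poly_eq_Re_sum_cis sum_distrib_left Re_sum
    by (subst sum.swap) (simp add: mult.left_commute)
  also have "\<dots> = 0"
    using assms by (subst sum.neutral) auto
  finally show ?thesis .
qed

lemma trig_poly_shift_int:
  assumes "\<And>i. i < n \<Longrightarrow> z i - w i \<in> \<int>"
  shows "trig_poly n S a b z = trig_poly n S a b w"
  unfolding trig_poly_def
proof (rule sum.cong[OF refl])
  fix \<alpha> :: "nat list"
  have "(\<Sum>i<n. \<alpha> ! i * z i) - (\<Sum>i<n. \<alpha> ! i * w i) = (\<Sum>i<n. \<alpha> ! i * (z i - w i))"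
    by (simp add: sum_subtractf algebra_simps)
  also have "\<dots> \<in> \<int>"
    using assms by (intro Ints_sum Ints_mult) auto
  finally obtain m :: int where
    "2 * pi * (\<Sum>i<n. \<alpha> ! i * z i) = 2 * pi * (\<Sum>i<n. \<alpha> ! i * w i) + 2 * pi * m"
    by (elim Ints_cases) (simp add: algebra_simps)
  then show "a \<alpha> * cos (2 * pi * (\<Sum>i<n. \<alpha> ! i * z i)) + b \<alpha> * sin (2 * pi * (\<Sum>i<n. \<alpha> ! i * z i))
    = a \<alpha> * cos (2 * pi * (\<Sum>i<n. \<alpha> ! i * w i)) + b \<alpha> * sin (2 * pi * (\<Sum>i<n. \<alpha> ! i * w i))"
    by (simp add: cos_add sin_add)
qed

lemma trig_poly_frac: "trig_poly n S a b (\<lambda>i. frac (z i)) = trig_poly n S a b z"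
  by (rule trig_poly_shift_int) (simp add: frac_def)

lemma torus_pt_frac: "torus_pt n (\<lambda>i. frac (z i))"
  unfolding torus_pt_def by (simp add: frac_lt_1)

lemma torus_coord_dist_frac_le:
  fixes x z :: real
  assumes "0 \<le> x" "x < 1"
  shows "min \<bar>x - frac z\<bar> (1 - \<bar>x - frac z\<bar>) \<le> \<bar>x - z\<bar>"
proof -
  note frac = frac_ge_0[of z] frac_lt_1[of z] frac_def[of z]
  consider "\<lfloor>z\<rfloor> = 0" | "\<lfloor>z\<rfloor> \<ge> 1" | "\<lfloor>z\<rfloor> \<le> -1"
    by linarith
  then show ?thesis
  proof cases
    case 1
    then show ?thesis using frac by simp
  next
    case 2
    then have "real_of_int \<lfloor>z\<rfloor> \<ge> 1" by simp
    then show ?thesis using frac assms by linarith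
  next
    case 3
    then have "real_of_int \<lfloor>z\<rfloor> \<le> -1" by simp
    then show ?thesis using frac assms by linarith
  qed
qed

lemma torus_dist_frac_le:
  assumes "torus_pt n x"
  shows "torus_dist n x (\<lambda>i. frac (z i)) \<le> sqrt (\<Sum>i<n. (x i - z i)\<^sup>2)"
  unfolding torus_dist_def
proof (intro real_sqrt_le_mono sum_mono)
  fix i assume "i \<in> {..<n}"
  then have "0 \<le> x i" "x i < 1"
    using assms unfolding torus_pt_def by auto
  moreover have "0 \<le> frac (z i)" "frac (z i) < 1"
    by (simp_all add: frac_lt_1)
  ultimately have "0 \<le> min \<bar>x i - frac (z i)\<bar> (1 - \<bar>x i - frac (z i)\<bar>)"
    by linarith
  with torus_coord_dist_frac_le[OF \<open>0 \<le> x i\<close> \<open>x i < 1\<close>]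
  show "(min \<bar>x i - frac (z i)\<bar> (1 - \<bar>x i - frac (z i)\<bar>))\<^sup>2 \<le> (x i - z i)\<^sup>2"
    by (metis power2_abs power_mono)
qed

lemma root_on_unit_interval_if_weighted_sum_eq_0:
  fixes g :: "'k \<Rightarrow> real \<Rightarrow> real" and w :: "'k \<Rightarrow> real"
  assumes "finite I" "I \<noteq> {}" "\<And>k. k \<in> I \<Longrightarrow> w k > 0"
    and "\<And>k. k \<in> I \<Longrightarrow> continuous_on {0..1} (g k)"
    and "\<And>k. k \<in> I \<Longrightarrow> g k 0 = c"
    and "(\<Sum>k\<in>I. w k * g k 1) = 0"
  shows "\<exists>k\<in>I. \<exists>s\<in>{0..1}. g k s = 0"
proof -
  have "\<exists>k\<in>I. c * g k 1 \<le> 0"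
  proof (rule ccontr)
    assume "\<not> ?thesis"
    then have "0 < (\<Sum>k\<in>I. w k * (c * g k 1))"
      using assms(1-3) by (intro sum_pos) auto
    also have "\<dots> = c * (\<Sum>k\<in>I. w k * g k 1)"
      by (simp add: sum_distrib_left mult.left_commute)
    finally show False
      using assms(6) by simp
  qed
  then obtain k where k: "k \<in> I" "c * g k 1 \<le> 0" ..
  have "g k 0 \<le> 0 \<and> 0 \<le> g k 1 \<or> 0 \<le> g k 0 \<and> g k 1 \<le> 0"
    using k assms(5) by (auto simp: mult_le_0_iff)
  then have "\<exists>s. 0 \<le> s \<and> s \<le> 1 \<and> g k s = 0"
    using IVT'[of "g k" 0 0 1] IVT2'[of "g k" 1 0 0] assms(4) k(1) by auto
  with k(1) show ?thesis by (meson atLeastAtMost_iff)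
qed

lemma trig_poly_zero_in_ball_if_weighted_sum_eq_0:
  fixes v :: "'k \<Rightarrow> nat \<Rightarrow> real" and w :: "'k \<Rightarrow> real"
  assumes "torus_pt n x" "finite I" "I \<noteq> {}" "\<And>k. k \<in> I \<Longrightarrow> w k > 0"
    and "\<And>k. k \<in> I \<Longrightarrow> (\<Sum>i<n. (v k i)\<^sup>2) \<le> R"
    and "(\<Sum>k\<in>I. w k * trig_poly n S a b (\<lambda>i. x i + v k i)) = 0"
  shows "\<exists>y. torus_pt n y \<and> torus_dist n x y \<le> sqrt R \<and> trig_poly n S a b y = 0"
proof -
  define g where "g k s = trig_poly n S a b (\<lambda>i. x i + s * v k i)" for k s
  have "continuous_on {0..1} (g k)" for k
    unfolding g_def trig_poly_def by (intro continuous_intros)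
  then obtain k s where ks: "k \<in> I" "0 \<le> s" "s \<le> 1" "g k s = 0"
    using root_on_unit_interval_if_weighted_sum_eq_0[of I w g "trig_poly n S a b x"] assms(2-4,6)
    unfolding g_def by auto
  define y where "y i = frac (x i + s * v k i)" for i
  have "(\<Sum>i<n. (x i - (x i + s * v k i))\<^sup>2) \<le> (\<Sum>i<n. (v k i)\<^sup>2)"
  proof (rule sum_mono)
    fix i
    have "s\<^sup>2 * (v k i)\<^sup>2 \<le> 1 * (v k i)\<^sup>2"
      using ks by (intro mult_right_mono) (auto simp: power_le_one)
    then show "(x i - (x i + s * v k i))\<^sup>2 \<le> (v k i)\<^sup>2"
      by (simp add: power_mult_distrib)
  qed
  then have "torus_dist n x y \<le> sqrt R"
    using torus_dist_frac_le[OF assms(1), of "\<lambda>i. x i + s * v k i"] assms(5)[OF ks(1)]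
    unfolding y_def by (meson order_trans real_sqrt_le_mono)
  moreover have "torus_pt n y" "trig_poly n S a b y = 0"
    using ks(4) unfolding y_def g_def by (simp_all add: torus_pt_frac trig_poly_frac)
  ultimately show ?thesis by blast
qed

lemma sum_trig_poly_grid_eq_0:
  assumes "p > 0" "\<forall>\<alpha>\<in>S. \<exists>i<n. \<not> p dvd \<alpha> ! i"
  shows "(\<Sum>k\<in>PiE {..<n} (\<lambda>_. {..<p}). trig_poly n S a b (\<lambda>i. x i + real (k i) / p)) = 0"
proof -
  have "(\<Sum>k\<in>PiE {..<n} (\<lambda>_. {..<p}). 1 * trig_poly n S a b (\<lambda>i. x i + k i / p)) = 0"
  proof (rule weighted_sum_trig_poly_eq_0)
    fix \<alpha> assume "\<alpha> \<in> S"
    then obtain j where "j < n" "\<not> p dvd \<alpha> ! j"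
      using assms(2) by blast
    then show "(\<Sum>k\<in>PiE {..<n} (\<lambda>_. {..<p}).
        of_real 1 * cis (2 * pi * (\<Sum>i<n. real (\<alpha> ! i) * (x i + k i / p)))) = 0"
      using sum_cis_grid_eq_0[OF assms(1)] by simp
  qed
  then show ?thesis by simp
qed

lemma abs_centered_residue_le:
  assumes "odd p" "k < p"
  shows "\<bar>real k / p - of_bool (p < 2 * k)\<bar> \<le> (real p - 1) / (2 * real p)"
proof (cases "p < 2 * k")
  case True
  then have "real k / p - 1 = (2 * real k - 2 * real p) / (2 * real p)"
    "0 \<le> 2 * real p - 2 * real k" "2 * real p - 2 * real k \<ge> 1"
    using assms(2) by (simp_all add: field_simps)
  with True show ?thesis
    by (simp add: abs_div_pos divide_right_mono)
next
  case False
  moreover have "2 * k \<noteq> p"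
    using assms(1) by auto
  ultimately have "2 * real k \<le> real p - 1"
    by linarith
  then have "2 * real k / (2 * real p) \<le> (real p - 1) / (2 * real p)"
    by (rule divide_right_mono) simp
  with False show ?thesis
    by simp
qed

lemma trig_poly_zero_in_ball_grid:
  assumes "odd p" "\<forall>\<alpha>\<in>S. \<exists>i<n. \<not> p dvd \<alpha> ! i" "torus_pt n x"
  shows "\<exists>y. torus_pt n y \<and> torus_dist n x y \<le> sqrt (real n * ((real p - 1) / (2 * real p))\<^sup>2)
           \<and> trig_poly n S a b y = 0"
proof -
  define I where "I = PiE {..<n} (\<lambda>_. {..<p})"
  define v where "v k i = real (k i) / p - of_bool (p < 2 * k i)" for k :: "nat \<Rightarrow> nat" and i
  have "p > 0"
    using assms(1) by (intro odd_pos)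
  have "finite I" "I \<noteq> {}"
    unfolding I_def using \<open>p > 0\<close> by (auto simp: finite_PiE PiE_eq_empty_iff)
  moreover have "(\<Sum>i<n. (v k i)\<^sup>2) \<le> real n * ((real p - 1) / (2 * real p))\<^sup>2" if "k \<in> I" for k
  proof -
    have "(v k i)\<^sup>2 \<le> ((real p - 1) / (2 * real p))\<^sup>2" if "i < n" for i
    proof -
      have "\<bar>v k i\<bar> \<le> (real p - 1) / (2 * real p)"
        using abs_centered_residue_le[OF assms(1), of "k i"] \<open>k \<in> I\<close> \<open>i < n\<close>
        unfolding v_def I_def by (auto simp: PiE_iff)
      then have "\<bar>v k i\<bar>\<^sup>2 \<le> ((real p - 1) / (2 * real p))\<^sup>2"
        by (rule power_mono) simp
      then show ?thesis by simp
    qed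
    then show ?thesis
      using sum_mono[of "{..<n}" "\<lambda>i. (v k i)\<^sup>2" "\<lambda>_. ((real p - 1) / (2 * real p))\<^sup>2"] by simp
  qed
  moreover have "(\<Sum>k\<in>I. 1 * trig_poly n S a b (\<lambda>i. x i + v k i)) = 0"
  proof -
    have "trig_poly n S a b (\<lambda>i. x i + v k i) = trig_poly n S a b (\<lambda>i. x i + real (k i) / p)" for k
      by (rule trig_poly_shift_int) (simp add: v_def)
    then show ?thesis
      using sum_trig_poly_grid_eq_0[OF \<open>p > 0\<close> assms(2)] unfolding I_def by simp
  qed
  ultimately show ?thesis
    by (intro trig_poly_zero_in_ball_if_weighted_sum_eq_0[OF assms(3), of I "\<lambda>_. 1"]) auto
qed

lemma exists_residue_avoiding_sums_and_differences:
  fixes A :: "int set"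
  assumes "finite A" "2 * card A + 2 \<le> p"
  shows "\<exists>\<beta>. 0 < \<beta> \<and> \<beta> < int p \<and> (\<forall>\<alpha>\<in>A. \<not> int p dvd \<alpha> + \<beta> \<and> \<not> int p dvd \<alpha> - \<beta>)"
proof -
  define bad where "bad = (\<lambda>\<alpha>. (- \<alpha>) mod int p) ` A \<union> (\<lambda>\<alpha>. \<alpha> mod int p) ` A"
  have "finite bad"
    unfolding bad_def using assms(1) by simp
  have "card bad \<le> card A + card A"
    unfolding bad_def by (intro card_Un_le[THEN order_trans] add_mono card_image_le assms(1))
  also have "\<dots> < card {1..<int p}"
    using assms(2) by simp
  finally obtain \<beta> where \<beta>: "\<beta> \<in> {1..<int p}" "\<beta> \<notin> bad"
    using card_mono[OF \<open>finite bad\<close>, of "{1..<int p}"] by force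
  then have "\<beta> mod int p = \<beta>"
    by simp
  then have "\<not> int p dvd \<alpha> + \<beta> \<and> \<not> int p dvd \<alpha> - \<beta>" if "\<alpha> \<in> A" for \<alpha>
    using \<beta>(2) that mod_eq_dvd_iff[of \<beta> "int p" "- \<alpha>"] mod_eq_dvd_iff[of \<alpha> "int p" \<beta>]
    unfolding bad_def by (auto simp: add.commute)
  moreover have "0 < \<beta>" "\<beta> < int p"
    using \<beta>(1) by auto
  ultimately show ?thesis by blast
qed

lemma one_minus_cos_pos:
  assumes "prime p" "0 < \<beta>" "\<beta> < int p" "0 < k" "k < p"
  shows "0 < 1 - cos (2 * pi * \<beta> * k / p)"
proof -
  have "\<not> int p dvd \<beta> * int k"
    using assms by (auto simp: prime_dvd_mult_iff zdvd_not_zless)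
  then have "cos (2 * pi * of_int (\<beta> * int k) / p) \<noteq> 1"
    using cos_2pi_div_eq_1_iff[of p "\<beta> * int k"] assms(5) by simp
  then show ?thesis
    using cos_le_one[of "2 * pi * \<beta> * k / p"] by (simp add: mult.assoc less_le)
qed

lemma trig_poly_zero_in_ball_dim1:
  assumes "prime p" "finite S" "2 * card S + 2 \<le> p" "\<forall>\<alpha>\<in>S. \<not> p dvd \<alpha> ! 0" "torus_pt 1 x"
  shows "\<exists>y. torus_pt 1 y \<and> torus_dist 1 x y \<le> (real p - 2) / (2 * real p) \<and> trig_poly 1 S a b y = 0"
proof -
  have "p \<ge> 2"
    using assms(3) by simp
  have "card ((\<lambda>\<alpha>. int (\<alpha> ! 0)) ` S) \<le> card S"
    using assms(2) by (rule card_image_le)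
  then obtain \<beta> where \<beta>: "0 < \<beta>" "\<beta> < int p"
    "\<forall>\<alpha>\<in>S. \<not> int p dvd int (\<alpha> ! 0) + \<beta> \<and> \<not> int p dvd int (\<alpha> ! 0) - \<beta>"
    using exists_residue_avoiding_sums_and_differences[of "(\<lambda>\<alpha>. int (\<alpha> ! 0)) ` S" p] assms(2,3)
    by auto
  define w where "w k = 1 - cos (2 * pi * \<beta> * k / p)" for k :: nat
  define v where "v k i = real k / p - 1 / 2" for k :: nat and i :: nat
  have "(\<Sum>k<p. w k * trig_poly 1 S a b (\<lambda>i. x i + v k i)) = 0"
  proof (rule weighted_sum_trig_poly_eq_0)
    fix \<alpha> assume "\<alpha> \<in> S"
    have "2 * pi * (\<Sum>i<1. real (\<alpha> ! i) * (x i + v k i))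
        = 2 * pi * \<alpha> ! 0 * (x 0 - 1 / 2) + 2 * pi * int (\<alpha> ! 0) * k / p" for k
      unfolding v_def by (simp add: algebra_simps add_divide_distrib)
    then show "(\<Sum>k<p. of_real (w k) * cis (2 * pi * (\<Sum>i<1. real (\<alpha> ! i) * (x i + v k i)))) = 0"
      using sum_one_minus_cos_cis_eq_0[of p "int (\<alpha> ! 0)" \<beta>] \<open>p \<ge> 2\<close> \<beta>(3) assms(4) \<open>\<alpha> \<in> S\<close>
      unfolding w_def by simp
  qed
  \<comment> \<open>\<open>w 0 = 0\<close>, so the point at distance 1/2 drops out\<close>
  then have sum_eq_0: "(\<Sum>k\<in>{1..<p}. w k * trig_poly 1 S a b (\<lambda>i. x i + v k i)) = 0"
    using \<open>p \<ge> 2\<close> by (simp add: w_def lessThan_atLeast0 sum.atLeast_Suc_lessThan)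
  have w_pos: "w k > 0" if "k \<in> {1..<p}" for k
    unfolding w_def using one_minus_cos_pos[OF assms(1) \<beta>(1,2), of k] that by simp
  have v_bound: "(\<Sum>i<1. (v k i)\<^sup>2) \<le> ((real p - 2) / (2 * real p))\<^sup>2" if "k \<in> {1..<p}" for k
  proof -
    have "v k 0 = (2 * real k - real p) / (2 * real p)"
      using \<open>p \<ge> 2\<close> by (simp add: v_def field_simps)
    moreover have "\<bar>2 * real k - real p\<bar> \<le> real p - 2"
      using that by auto
    ultimately have "\<bar>v k 0\<bar> \<le> (real p - 2) / (2 * real p)"
      by (simp only: abs_divide abs_of_pos) (rule divide_right_mono, auto)
    then have "\<bar>v k 0\<bar>\<^sup>2 \<le> ((real p - 2) / (2 * real p))\<^sup>2"
      by (rule power_mono) simp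
    then show ?thesis
      by simp
  qed
  have "{1..<p} \<noteq> {}"
    using \<open>p \<ge> 2\<close> by simp
  from trig_poly_zero_in_ball_if_weighted_sum_eq_0[OF assms(5) finite_atLeastLessThan this w_pos v_bound sum_eq_0]
  obtain y where "torus_pt 1 y" "torus_dist 1 x y \<le> sqrt (((real p - 2) / (2 * real p))\<^sup>2)"
    "trig_poly 1 S a b y = 0"
    by blast
  then show ?thesis
    using \<open>p \<ge> 2\<close> by auto
qed

lemma grid_half_diagonal_sq_le:
  fixes n p :: nat
  assumes "n \<ge> 2" "p \<ge> 1"
  shows "real n * ((real p - 1) / (2 * real p))\<^sup>2 \<le> (real n - 1) / 4 + ((real p - 2) / (2 * real p))\<^sup>2"
proof -
  have "(real n - 1) / 4 + ((real p - 2) / (2 * real p))\<^sup>2 - real n * ((real p - 1) / (2 * real p))\<^sup>2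
      = ((real n - 2) * (2 * real p - 1) + 2) / (4 * (real p)\<^sup>2)"
    using assms(2) by (simp add: field_simps power2_eq_square)
  also have "\<dots> \<ge> 0"
    using assms by (intro divide_nonneg_pos) auto
  finally show ?thesis by simp
qed

theorem theorem1p2:
  fixes n p :: nat and S :: "nat list set" and a b :: "nat list \<Rightarrow> real"
  assumes "n \<ge> 1" and "prime p" and "p \<ge> 3"
    and "finite S"
    and "\<forall>\<alpha>\<in>S. length \<alpha> = n \<and> \<alpha> \<noteq> replicate n 0"
    and "real (card S) \<le> (real p ^ n) / 2 - 1"
    and "\<forall>\<alpha>\<in>S. \<exists>i<n. \<not> p dvd (\<alpha> ! i)"
  shows "\<forall>x. torus_pt n x \<longrightarrow>
           (\<exists>y. torus_pt n y
                \<and> torus_dist n x y \<le> sqrt ((real n - 1) / 4 + ((real p - 2) / (2 * real p))^2)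
                \<and> trig_poly n S a b y = 0)"
\<comment> \<open>The hypothesis on lengths and nonzero multi-indices is not needed: only the first n entries
  of each \<open>\<alpha>\<close> are read, and the last hypothesis already excludes \<open>\<alpha> \<equiv> 0 mod p\<close>.\<close>
proof (intro allI impI)
  fix x assume x: "torus_pt n x"
  show "\<exists>y. torus_pt n y \<and> torus_dist n x y \<le> sqrt ((real n - 1) / 4 + ((real p - 2) / (2 * real p))^2)
          \<and> trig_poly n S a b y = 0"
  proof (cases "n = 1")
    case True
    have "2 * card S + 2 \<le> p"
      using assms(6) True by simp
    moreover have "\<forall>\<alpha>\<in>S. \<not> p dvd \<alpha> ! 0"
      using assms(7) True by auto
    moreover have "(real p - 2) / (2 * real p) \<ge> 0"
      using assms(3) by simp
    ultimately show ?thesis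
      using trig_poly_zero_in_ball_dim1[where a = a and b = b and x = x] assms(2,4) x True by simp
  next
    case False
    have "odd p"
      using assms(2,3) prime_odd_nat by force
    from trig_poly_zero_in_ball_grid[OF this assms(7) x] obtain y where y: "torus_pt n y"
      "torus_dist n x y \<le> sqrt (real n * ((real p - 1) / (2 * real p))\<^sup>2)" "trig_poly n S a b y = 0"
      by blast
    have "n \<ge> 2" "p \<ge> 1"
      using assms(1,3) False by auto
    from grid_half_diagonal_sq_le[OF this] y show ?thesis
      by (meson order_trans real_sqrt_le_mono)
  qed
qed

end
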